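(* Let $1<\alpha<2$, $b>0$, $N\ge 2$ an integer, $h=b/N$, $\kappa_\alpha=-1/(2\cos(\alpha\pi/2))>0$, and let $A_h=\frac{\kappa_\alpha}{h^{\alpha-1}\Gamma(4-\alpha)}B_h$, where $B_h=(b_{i,j})_{i,j=1}^{N-1}$ is the symmetric matrix with $b_{i,i}=8-2^{4-\alpha}+\widetilde b_{i,i}$ ($1\le i\le N-1$), $b_{i,i+1}=b_{i+1,i}=-7-3^{3-\alpha}+2^{5-\alpha}+\widetilde b_{i,i+1}$ ($1\le i\le N-2$), and for $m=|j-i|\ge2$, $b_{i,j}=-(m+2)^{3-\alpha}+4(m+1)^{3-\alpha}-6m^{3-\alpha}+4(m-1)^{3-\alpha}-(m-2)^{3-\alpha}$, with $$\widetilde b_{i,i}=2\big[(i+1)^{3-\alpha}-2(3-\alpha)i^{2-\alpha}-(i-1)^{3-\alpha}\big]+2\big[(N-i+1)^{3-\alpha}-2(3-\alpha)(N-i)^{2-\alpha}-(N-i-1)^{3-\alpha}\big],$$ $$\widetilde b_{i,i+1}=-2\big[(i+1)^{3-\alpha}-i^{3-\alpha}\big]+(3-\alpha)\big[(i+1)^{2-\alpha}+i^{2-\alpha}\big]-2\big[(N-i)^{3-\alpha}-(N-i-1)^{3-\alpha}\big]+(3-\alpha)\big[(N-i)^{2-\alpha}+(N-i-1)^{2-\alpha}\big].$$ Let $D_h$ be the diagonal part of $A_h$. Then $1\le \lambda_{\max}(D_h^{-1}A_h)<2$.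
   Context: Here $0^{p}=0$ for $p>0$. $A_h$ is the stiffness matrix of the piecewise linear finite element discretization on the uniform mesh of $(0,b)$ of the fractional Laplacian $C_\alpha\int_0^b\frac{u(x)-u(y)}{|x-y|^{1+\alpha}}dy$ with zero exterior condition; $\lambda_{\max}$ denotes the largest eigenvalue. *)

theory Defs
  imports "HOL-Analysis.Analysis" "Jordan_Normal_Form.Matrix" "Jordan_Normal_Form.Char_Poly"
begin

text \<open>Entries of B_h, 1-based indices i j in 1..N-1; powr with 0 powr p = 0.\<close>

definition btil_diag :: "real \<Rightarrow> nat \<Rightarrow> nat \<Rightarrow> real" where
  "btil_diag \<alpha> N i =
     2 * ((real i + 1) powr (3 - \<alpha>) - 2 * (3 - \<alpha>) * real i powr (2 - \<alpha>) - (real i - 1) powr (3 - \<alpha>))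
   + 2 * ((real N - real i + 1) powr (3 - \<alpha>) - 2 * (3 - \<alpha>) * (real N - real i) powr (2 - \<alpha>)
          - (real N - real i - 1) powr (3 - \<alpha>))"

definition btil_off :: "real \<Rightarrow> nat \<Rightarrow> nat \<Rightarrow> real" where
  "btil_off \<alpha> N i =
     - 2 * ((real i + 1) powr (3 - \<alpha>) - real i powr (3 - \<alpha>))
   + (3 - \<alpha>) * ((real i + 1) powr (2 - \<alpha>) + real i powr (2 - \<alpha>))
   - 2 * ((real N - real i) powr (3 - \<alpha>) - (real N - real i - 1) powr (3 - \<alpha>))
   + (3 - \<alpha>) * ((real N - real i) powr (2 - \<alpha>) + (real N - real i - 1) powr (2 - \<alpha>))"

definition b_entry :: "real \<Rightarrow> nat \<Rightarrow> nat \<Rightarrow> nat \<Rightarrow> real" where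
  "b_entry \<alpha> N i j =
    (if i = j then 8 - 2 powr (4 - \<alpha>) + btil_diag \<alpha> N i
     else if j = i + 1 then -7 - 3 powr (3 - \<alpha>) + 2 powr (5 - \<alpha>) + btil_off \<alpha> N i
     else if i = j + 1 then -7 - 3 powr (3 - \<alpha>) + 2 powr (5 - \<alpha>) + btil_off \<alpha> N j
     else (let m = real (if i \<le> j then j - i else i - j) in
       - ((m + 2) powr (3 - \<alpha>)) + 4 * (m + 1) powr (3 - \<alpha>) - 6 * m powr (3 - \<alpha>)
       + 4 * (m - 1) powr (3 - \<alpha>) - (m - 2) powr (3 - \<alpha>)))"

definition B_h :: "real \<Rightarrow> nat \<Rightarrow> real mat" where
  "B_h \<alpha> N = mat (N - 1) (N - 1) (\<lambda>(i, j). b_entry \<alpha> N (i + 1) (j + 1))"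

definition kappa :: "real \<Rightarrow> real" where
  "kappa \<alpha> = - 1 / (2 * cos (\<alpha> * pi / 2))"

definition A_h :: "real \<Rightarrow> real \<Rightarrow> nat \<Rightarrow> real mat" where
  "A_h \<alpha> b N = (let h = b / real N in
     (kappa \<alpha> / (h powr (\<alpha> - 1) * Gamma (4 - \<alpha>))) \<cdot>\<^sub>m B_h \<alpha> N)"

definition diag_part :: "real mat \<Rightarrow> real mat" where
  "diag_part A = mat_diag (dim_row A) (\<lambda>i. A $$ (i, i))"

definition diag_inv :: "real mat \<Rightarrow> real mat" where
  "diag_inv D = mat_diag (dim_row D) (\<lambda>i. 1 / D $$ (i, i))"

definition lambda_max :: "real mat \<Rightarrow> real" where
  "lambda_max M = Max {k. eigenvalue M k}"

end

theory Submission
  imports Defs "Jordan_Normal_Form.Schur_Decomposition"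
begin

text \<open>
  Put p = 3 - \<alpha>, so 1 < p < 2, and f x = \<bar>x\<bar> powr p. Away from the diagonal, b_{i,j} is
  minus the fourth difference of f at j - i - 2, which is negative because the fourth derivative
  of f is positive on (0, \<infinity>); the neighbours of the diagonal are controlled by
  4 * 2^p \<le> 7 + 3^p, and the corrections in b_{i,i+1} are errors of the trapezoidal rule for
  the concave function f', hence negative. Along a row the fourth differences telescope to third
  differences of f at both ends of the row, and these are dominated by the second differences
  of f' contained in b_{i,i}. So B_h is symmetric with nonpositive off-diagonal entries and
  positive row sums: it is strictly diagonally dominant with positive diagonal. For such B the
  spectrum of D^-1 B is real (from D^-1 B v = z v follows v* B v = z v* D v, where both
  Hermitian forms are real and v* D v > 0); Gershgorin's theorem puts it in (0, 2), and since
  the trace of D^-1 B is the dimension, the largest eigenvalue is at least 1.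
\<close>

section \<open>Forward differences\<close>

fun fwd_diff :: "nat \<Rightarrow> (real \<Rightarrow> real) \<Rightarrow> real \<Rightarrow> real" where
  "fwd_diff 0 g x = g x"
| "fwd_diff (Suc n) g x = fwd_diff n g (x + 1) - fwd_diff n g x"

lemma fwd_diff_2: "fwd_diff 2 g x = g (x + 2) - 2 * g (x + 1) + g x"
  by (simp add: numeral_eq_Suc algebra_simps)

lemma fwd_diff_3: "fwd_diff 3 g x = g (x + 3) - 3 * g (x + 2) + 3 * g (x + 1) - g x"
  by (simp add: numeral_eq_Suc algebra_simps)

lemma fwd_diff_4:
  "fwd_diff 4 g x = g (x + 4) - 4 * g (x + 3) + 6 * g (x + 2) - 4 * g (x + 1) + g x"
  by (simp add: numeral_eq_Suc algebra_simps)

lemma fwd_diff_cong_ge: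
  assumes "\<And>y. x \<le> y \<Longrightarrow> g y = h y"
  shows "fwd_diff n g x = fwd_diff n h x"
  using assms by (induction n arbitrary: x) auto

lemma sum_fwd_diff_Suc:
  "(\<Sum>c<m. fwd_diff (Suc n) g (real c + x)) = fwd_diff n g (real m + x) - fwd_diff n g x"
  using sum_lessThan_telescope[of "\<lambda>c. fwd_diff n g (real c + x)" m] by (simp add: add_ac)

lemma fwd_diff_reflect:
  assumes "\<And>x. g (- x) = g x"
  shows "fwd_diff n g (- x - real n) = (- 1) ^ n * fwd_diff n g x"
proof (induction n arbitrary: x)
  case 0
  then show ?case by (simp add: assms)
next
  case (Suc n)
  have shift: "- x - real (Suc n) + 1 = - x - real n" "- x - real (Suc n) = - (x + 1) - real n"
    by simp_all
  have "fwd_diff (Suc n) g (- x - real (Suc n))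
      = fwd_diff n g (- x - real n) - fwd_diff n g (- (x + 1) - real n)"
    by (simp only: fwd_diff.simps shift(1), simp only: shift(2))
  also have "\<dots> = (- 1) ^ Suc n * fwd_diff (Suc n) g x"
    unfolding Suc.IH by (simp add: algebra_simps)
  finally show ?case .
qed

lemma fwd_diff_has_real_derivative:
  assumes "\<And>y. x \<le> y \<Longrightarrow> (g has_real_derivative g' y) (at y)"
  shows "(fwd_diff n g has_real_derivative fwd_diff n g' x) (at x)"
  using assms
proof (induction n arbitrary: x)
  case 0
  then show ?case by simp
next
  case (Suc n)
  have "((\<lambda>y. fwd_diff n g (y + 1)) has_real_derivative fwd_diff n g' (x + 1)) (at x)"
    using Suc.IH[of "x + 1"] Suc.prems by (simp add: DERIV_shift)
  then show ?case
    using Suc.IH[of x] Suc.prems by (auto intro: DERIV_diff)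
qed

lemma continuous_on_fwd_diff:
  assumes "continuous_on {a..} g"
  shows "continuous_on {a..} (fwd_diff n g)"
proof (induction n)
  case 0
  then show ?case using assms by (simp add: fun_eq_iff[symmetric])
next
  case (Suc n)
  have "continuous_on {a..} (\<lambda>x. fwd_diff n g (x + 1))"
    by (rule continuous_on_compose2[OF Suc.IH]) (auto intro: continuous_intros)
  with Suc.IH show ?case by (auto intro: continuous_on_diff)
qed

lemma fwd_diff_mvt:
  assumes "a < b" "continuous_on {a..} g"
    and "\<And>y. a < y \<Longrightarrow> (g has_real_derivative g' y) (at y)"
  shows "\<exists>z. a < z \<and> z < b \<and> fwd_diff n g b - fwd_diff n g a = (b - a) * fwd_diff n g' z"
proof -
  have deriv: "(fwd_diff n g has_real_derivative fwd_diff n g' z) (at z)" if "a < z" for z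
    using that assms(3) by (intro fwd_diff_has_real_derivative) auto
  have "continuous_on {a..b} (fwd_diff n g)"
    using continuous_on_fwd_diff[OF assms(2)] by (rule continuous_on_subset) auto
  then have "\<exists>l z. a < z \<and> z < b \<and> (fwd_diff n g has_real_derivative l) (at z)
      \<and> fwd_diff n g b - fwd_diff n g a = (b - a) * l"
    using deriv by (intro MVT[OF assms(1)]) (auto simp: real_differentiable_def)
  then show ?thesis
    using deriv by (metis DERIV_unique)
qed

lemma concave_trapezoid_lt_increment:
  fixes F f f' :: "real \<Rightarrow> real"
  assumes "a < b"
    and F: "\<And>x. a \<le> x \<Longrightarrow> x \<le> b \<Longrightarrow> (F has_real_derivative f x) (at x)"
    and f: "\<And>x. a \<le> x \<Longrightarrow> x \<le> b \<Longrightarrow> (f has_real_derivative f' x) (at x)"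
    and decreasing: "\<And>x y. a \<le> x \<Longrightarrow> x < y \<Longrightarrow> y \<le> b \<Longrightarrow> f' y < f' x"
  shows "(b - a) * (f a + f b) < 2 * (F b - F a)"
proof -
  define \<phi> where "\<phi> u = 2 * (F u - F a) - (u - a) * (f u + f a)" for u
  have deriv: "(\<phi> has_real_derivative f u - f a - (u - a) * f' u) (at u)"
    if "a \<le> u" "u \<le> b" for u
    unfolding \<phi>_def using F[OF that] f[OF that]
    by (auto intro!: derivative_eq_intros simp: algebra_simps)
  have "\<phi> a < \<phi> b"
  proof (rule DERIV_pos_imp_increasing_open[OF \<open>a < b\<close>])
    fix u assume u: "a < u" "u < b"
    obtain z where "a < z" "z < u" "f u - f a = (u - a) * f' z"
      using MVT2[OF \<open>a < u\<close>, of f f'] f u by force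
    moreover have "f' u < f' z" using decreasing \<open>a < z\<close> \<open>z < u\<close> u by simp
    moreover have "(u - a) * f' u < (u - a) * f' z"
      using \<open>f' u < f' z\<close> u by (intro mult_strict_left_mono) auto
    ultimately have "0 < f u - f a - (u - a) * f' u"
      by linarith
    moreover have "(\<phi> has_real_derivative f u - f a - (u - a) * f' u) (at u)"
      using deriv u by simp
    ultimately show "\<exists>y. (\<phi> has_real_derivative y) (at u) \<and> 0 < y" by blast
  next
    show "continuous_on {a..b} \<phi>"
      using deriv by (intro DERIV_atLeastAtMost_imp_continuous_on) auto
  qed
  then show ?thesis by (simp add: \<phi>_def add.commute)
qed

section \<open>Derivatives and differences of powers\<close>

definition powr_deriv :: "real \<Rightarrow> nat \<Rightarrow> real \<Rightarrow> real" where
  "powr_deriv p k x = (\<Prod>i<k. p - real i) * x powr (p - real k)"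

lemma powr_deriv_0: "powr_deriv p 0 = (\<lambda>x. x powr p)"
  by (simp add: powr_deriv_def fun_eq_iff)

lemma powr_deriv_Suc_0: "powr_deriv p (Suc 0) x = p * x powr (p - 1)"
  by (simp add: powr_deriv_def)

lemma powr_deriv_has_real_derivative:
  assumes "0 < x"
  shows "(powr_deriv p k has_real_derivative powr_deriv p (Suc k) x) (at x)"
  using assms unfolding powr_deriv_def[abs_def]
  by (auto intro!: derivative_eq_intros simp: algebra_simps)

lemma fwd_diff_powr_deriv_mvt:
  assumes "0 < a" "a < b"
  shows "\<exists>z. a < z \<and> z < b \<and> fwd_diff n (powr_deriv p k) b - fwd_diff n (powr_deriv p k) a
    = (b - a) * fwd_diff n (powr_deriv p (Suc k)) z"
proof (rule fwd_diff_mvt[OF assms(2)])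
  show "continuous_on {a..} (powr_deriv p k)"
    using assms(1)
    by (intro continuous_at_imp_continuous_on ballI DERIV_isCont[OF powr_deriv_has_real_derivative])
      auto
qed (use assms(1) powr_deriv_has_real_derivative in auto)

lemma fwd_diff_powr_deriv_pos:
  assumes "\<And>x. 0 < x \<Longrightarrow> 0 < powr_deriv p (k + n) x" and "0 < x"
  shows "0 < fwd_diff n (powr_deriv p k) x"
  using assms
proof (induction n arbitrary: k x)
  case 0
  then show ?case by simp
next
  case (Suc n)
  obtain z where "x < z"
    "fwd_diff (Suc n) (powr_deriv p k) x = fwd_diff n (powr_deriv p (Suc k)) z"
    using fwd_diff_powr_deriv_mvt[OF Suc.prems(2), of "x + 1" n p k] by auto
  with Suc.IH[of "Suc k" z] Suc.prems show ?case by simp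
qed

lemma fwd_diff_powr_deriv_strict_mono:
  assumes "\<And>x. 0 < x \<Longrightarrow> 0 < powr_deriv p (Suc k + n) x" and "0 < a" "a < b"
  shows "fwd_diff n (powr_deriv p k) a < fwd_diff n (powr_deriv p k) b"
proof -
  obtain z where "a < z"
    "fwd_diff n (powr_deriv p k) b - fwd_diff n (powr_deriv p k) a
      = (b - a) * fwd_diff n (powr_deriv p (Suc k)) z"
    using fwd_diff_powr_deriv_mvt[OF assms(2,3)] by blast
  moreover have "0 < fwd_diff n (powr_deriv p (Suc k)) z"
    using fwd_diff_powr_deriv_pos[of p "Suc k" n z] assms \<open>a < z\<close> by simp
  ultimately show ?thesis
    using \<open>a < b\<close> by (metis diff_gt_0_iff_gt mult_pos_pos)
qed

lemma fwd_diff_powr_mvt: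
  assumes "0 < p" "0 \<le> a"
  shows "\<exists>z. a < z \<and> z < a + 1
    \<and> fwd_diff (Suc n) (\<lambda>x. x powr p) a = fwd_diff n (powr_deriv p 1) z"
proof -
  have "continuous_on {a..} (\<lambda>x. x powr p)"
    using assms by (intro continuous_on_powr') (auto intro: continuous_intros)
  moreover have "((\<lambda>x. x powr p) has_real_derivative powr_deriv p 1 y) (at y)" if "a < y" for y
    using powr_deriv_has_real_derivative[of y p 0] that assms by (simp add: powr_deriv_0)
  ultimately show ?thesis
    using fwd_diff_mvt[of a "a + 1" "\<lambda>x. x powr p" "powr_deriv p 1" n] by auto
qed

text \<open>Twice the error of the trapezoidal rule for the integral of p x^(p-1) over [k, k + 1].\<close>

definition trapezoid_defect :: "real \<Rightarrow> real \<Rightarrow> real" where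
  "trapezoid_defect p k = powr_deriv p 1 k + powr_deriv p 1 (k + 1) - 2 * ((k + 1) powr p - k powr p)"

lemma four_mult_two_powr_le:
  assumes "p \<le> 2"
  shows "4 * 2 powr p \<le> 7 + (3::real) powr p"
proof -
  define s where "s = 2 - p"
  have "0 \<le> s" using assms s_def by simp
  have split: "x powr p = x powr 2 * x powr (- s)" for x :: real
    unfolding powr_add[symmetric] s_def by simp
  have three: "(3::real) powr p = 9 * 3 powr (- s)" and two: "(2::real) powr p = 4 * 2 powr (- s)"
    by (simp_all add: split)
  txt \<open>Weighted AM-GM with weights 9/16 and 7/16, using 2^16 \<ge> 3^9.\<close>
  have "(2::real) powr (- s) = (2 powr 16) powr (- s / 16)"
    unfolding powr_powr by simp
  also have "\<dots> \<le> (3 powr 9) powr (- s / 16)"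
    using \<open>0 \<le> s\<close> by (intro powr_mono2') auto
  also have "\<dots> = (3 powr (- s)) powr (9 / 16) * 1 powr (7 / 16)"
    unfolding powr_powr by (simp add: mult.commute)
  also have "\<dots> \<le> 9 / 16 * 3 powr (- s) + 7 / 16 * 1"
    by (rule Youngs_inequality_0) auto
  finally show ?thesis unfolding three two by simp
qed

context
  fixes p :: real
  assumes p_gt_1: "1 < p" and p_lt_2: "p < 2"
begin

lemma powr_deriv_3_neg: "0 < x \<Longrightarrow> powr_deriv p 3 x < 0"
proof -
  assume "0 < x"
  have "powr_deriv p 3 x = (p * (p - 1) * (p - 2)) * x powr (p - 3)"
    by (simp add: powr_deriv_def eval_nat_numeral)
  moreover have "p * (p - 1) * (p - 2) < 0"
    using p_gt_1 p_lt_2 by (intro mult_pos_neg) auto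
  ultimately show ?thesis
    using \<open>0 < x\<close> by (simp add: mult_neg_pos)
qed

lemma powr_deriv_4_pos: "0 < x \<Longrightarrow> 0 < powr_deriv p 4 x"
proof -
  assume "0 < x"
  have "powr_deriv p 4 x = (p * (p - 1) * ((p - 2) * (p - 3))) * x powr (p - 4)"
    by (simp add: powr_deriv_def eval_nat_numeral mult_ac)
  moreover have "0 < p * (p - 1) * ((p - 2) * (p - 3))"
    using p_gt_1 p_lt_2 by (intro mult_pos_pos mult_neg_neg) auto
  ultimately show ?thesis
    using \<open>0 < x\<close> by simp
qed

lemma fwd_diff_4_powr_pos: "0 \<le> a \<Longrightarrow> 0 < fwd_diff 4 (\<lambda>x. x powr p) a"
proof -
  assume "0 \<le> a"
  then obtain z where "a < z" "fwd_diff 4 (\<lambda>x. x powr p) a = fwd_diff 3 (powr_deriv p 1) z"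
    using fwd_diff_powr_mvt[of p a 3] p_gt_1 by (auto simp: numeral_eq_Suc)
  moreover have "0 < fwd_diff 3 (powr_deriv p 1) z"
    using \<open>0 \<le> a\<close> \<open>a < z\<close> powr_deriv_4_pos by (intro fwd_diff_powr_deriv_pos) auto
  ultimately show ?thesis by simp
qed

lemma fwd_diff_3_powr_lt:
  assumes "0 \<le> y"
  shows "fwd_diff 3 (\<lambda>x. x powr p) y < fwd_diff 2 (powr_deriv p 1) (y + 1)"
proof -
  obtain z where z: "y < z" "z < y + 1"
    "fwd_diff 3 (\<lambda>x. x powr p) y = fwd_diff 2 (powr_deriv p 1) z"
    using fwd_diff_powr_mvt[of p y 2] assms p_gt_1 by (auto simp: numeral_eq_Suc)
  have "fwd_diff 2 (powr_deriv p 1) z < fwd_diff 2 (powr_deriv p 1) (y + 1)"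
    using z assms powr_deriv_4_pos
    by (intro fwd_diff_powr_deriv_strict_mono) (auto simp: eval_nat_numeral)
  with z show ?thesis by simp
qed

lemma trapezoid_defect_neg:
  assumes "0 \<le> k"
  shows "trapezoid_defect p k < 0"
proof (cases "k = 0")
  case True
  then show ?thesis
    using p_lt_2 by (simp add: trapezoid_defect_def powr_deriv_Suc_0)
next
  case False
  with assms have "0 < k" by simp
  have F: "((\<lambda>x. x powr p) has_real_derivative powr_deriv p 1 x) (at x)"
    and f: "(powr_deriv p 1 has_real_derivative powr_deriv p 2 x) (at x)" if "k \<le> x" for x
    using powr_deriv_has_real_derivative[of x p 0] powr_deriv_has_real_derivative[of x p 1]
      \<open>0 < k\<close> that by (simp_all add: powr_deriv_0 numeral_2_eq_2)
  have decreasing: "powr_deriv p 2 y < powr_deriv p 2 x" if "k \<le> x" "x < y" for x y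
  proof (rule DERIV_neg_imp_decreasing[OF \<open>x < y\<close>])
    fix t assume "x \<le> t" "t \<le> y"
    then have "0 < t" using \<open>0 < k\<close> that by simp
    then show "\<exists>d. (powr_deriv p 2 has_real_derivative d) (at t) \<and> d < 0"
      using powr_deriv_has_real_derivative[of t p 2] powr_deriv_3_neg[of t]
      by (auto simp: numeral_3_eq_3 numeral_2_eq_2)
  qed
  have "(k + 1 - k) * (powr_deriv p 1 k + powr_deriv p 1 (k + 1))
      < 2 * ((k + 1) powr p - k powr p)"
    by (rule concave_trapezoid_lt_increment[OF _ F f decreasing]) auto
  then show ?thesis by (simp add: trapezoid_defect_def)
qed

lemma fwd_diff_4_abs_powr_nonneg:
  fixes i j :: nat
  assumes "i \<noteq> j"
  shows "0 \<le> fwd_diff 4 (\<lambda>x. \<bar>x\<bar> powr p) (real j - real i - 2)"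
proof -
  let ?g = "\<lambda>x. \<bar>x\<bar> powr p"
  have pos: "0 < fwd_diff 4 ?g x" if "0 \<le> x" for x
  proof -
    have "fwd_diff 4 ?g x = fwd_diff 4 (\<lambda>x. x powr p) x"
      using that by (intro fwd_diff_cong_ge) simp
    with fwd_diff_4_powr_pos[OF that] show ?thesis by simp
  qed
  consider "j = i + 1" | "i = j + 1" | "i + 2 \<le> j" | "j + 2 \<le> i"
    using assms by linarith
  then show ?thesis
  proof cases
    case 3
    then show ?thesis using pos[of "real j - real i - 2"] by simp
  next
    case 4
    then have "0 \<le> real i - real j - 2" by simp
    have "real j - real i - 2 = - (real i - real j - 2) - real 4" by simp
    then have "fwd_diff 4 ?g (real j - real i - 2) = fwd_diff 4 ?g (real i - real j - 2)"
      using fwd_diff_reflect[of ?g 4 "real i - real j - 2"] by simp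
    then show ?thesis using pos[OF \<open>0 \<le> real i - real j - 2\<close>] by simp
  qed (use four_mult_two_powr_le[of p] p_lt_2 in \<open>simp_all add: fwd_diff_4\<close>)
qed

lemma fwd_diff_3_abs_powr_lt:
  assumes "1 \<le> k"
  shows "fwd_diff 3 (\<lambda>x. \<bar>x\<bar> powr p) (real k - 2) < fwd_diff 2 (powr_deriv p 1) (real k - 1)"
proof (cases "k = 1")
  case True
  have "2 powr (p - 1) < (2::real) powr 1"
    using p_lt_2 by (intro powr_less_mono) auto
  then have "0 < (2 - p) * (2 - 2 powr (p - 1))"
    using p_lt_2 by (intro mult_pos_pos) auto
  moreover have "(2::real) powr p = 2 * 2 powr (p - 1)"
    by (simp add: powr_diff)
  ultimately show ?thesis
    using True p_gt_1 by (simp add: fwd_diff_2 fwd_diff_3 powr_deriv_Suc_0 algebra_simps)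
next
  case False
  with assms have "0 \<le> real k - 2" by simp
  then have "fwd_diff 3 (\<lambda>x. \<bar>x\<bar> powr p) (real k - 2) = fwd_diff 3 (\<lambda>x. x powr p) (real k - 2)"
    by (intro fwd_diff_cong_ge) simp
  also have "\<dots> < fwd_diff 2 (powr_deriv p 1) (real k - 1)"
    using fwd_diff_3_powr_lt[OF \<open>0 \<le> real k - 2\<close>] by simp
  finally show ?thesis .
qed

end

section \<open>Diagonally scaled symmetric diagonally dominant matrices\<close>

lemma diag_inv_diag_part:
  assumes "B \<in> carrier_mat n n"
  shows "diag_inv (diag_part B) = mat_diag n (\<lambda>i. 1 / B $$ (i, i))"
  using assms unfolding diag_inv_def diag_part_def by (intro eq_matI) (auto simp: mat_diag_def)

lemma diag_inv_diag_part_mult: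
  assumes "B \<in> carrier_mat n n"
  shows "diag_inv (diag_part B) * B = mat n n (\<lambda>(i, j). B $$ (i, j) / B $$ (i, i))"
  using assms by (simp add: diag_inv_diag_part mat_diag_mult_left)

lemma diag_inv_diag_part_smult_mult:
  assumes "B \<in> carrier_mat n n" "c \<noteq> 0"
  shows "diag_inv (diag_part (c \<cdot>\<^sub>m B)) * (c \<cdot>\<^sub>m B) = diag_inv (diag_part B) * B"
  using assms by (simp add: diag_inv_diag_part_mult[of _ n]) (intro eq_matI; simp)

definition pos_diag_dominant :: "real mat \<Rightarrow> bool" where
  "pos_diag_dominant B \<longleftrightarrow>
    (\<forall>i < dim_row B. (\<Sum>j \<in> {..<dim_col B} - {i}. \<bar>B $$ (i, j)\<bar>) < B $$ (i, i))"

lemma pos_diag_dominant_if_offdiag_nonpos: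
  assumes "B \<in> carrier_mat n n"
    and "\<And>i j. i < n \<Longrightarrow> j < n \<Longrightarrow> i \<noteq> j \<Longrightarrow> B $$ (i, j) \<le> 0"
    and "\<And>i. i < n \<Longrightarrow> 0 < (\<Sum>j<n. B $$ (i, j))"
  shows "pos_diag_dominant B"
  unfolding pos_diag_dominant_def
proof (intro allI impI)
  fix i assume "i < dim_row B"
  with assms(1) have "i < n" by simp
  have "(\<Sum>j \<in> {..<n} - {i}. \<bar>B $$ (i, j)\<bar>) = - (\<Sum>j \<in> {..<n} - {i}. B $$ (i, j))"
    using assms(2) \<open>i < n\<close> by (simp add: sum_negf[symmetric] abs_of_nonpos)
  moreover have "(\<Sum>j<n. B $$ (i, j)) = B $$ (i, i) + (\<Sum>j \<in> {..<n} - {i}. B $$ (i, j))"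
    using \<open>i < n\<close> by (subst sum.remove[of _ i]) auto
  moreover have "dim_col B = n" using assms(1) by simp
  ultimately show "(\<Sum>j \<in> {..<dim_col B} - {i}. \<bar>B $$ (i, j)\<bar>) < B $$ (i, i)"
    using assms(3)[OF \<open>i < n\<close>] by simp
qed

lemma pos_diag_dominant_diag_pos:
  assumes "pos_diag_dominant B" "i < dim_row B"
  shows "0 < B $$ (i, i)"
proof -
  have "0 \<le> (\<Sum>j \<in> {..<dim_col B} - {i}. \<bar>B $$ (i, j)\<bar>)"
    by (rule sum_nonneg) simp
  moreover have "(\<Sum>j \<in> {..<dim_col B} - {i}. \<bar>B $$ (i, j)\<bar>) < B $$ (i, i)"
    using assms unfolding pos_diag_dominant_def by blast
  ultimately show ?thesis by linarith
qed

lemma nonzero_vec_index: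
  fixes v :: "'a::zero vec"
  assumes "v \<in> carrier_vec n" "v \<noteq> 0\<^sub>v n"
  obtains i where "i < n" "v $ i \<noteq> 0"
  using assms by (metis carrier_vecD eq_vecI index_zero_vec)

lemma nonzero_vec_max_abs_index:
  fixes v :: "real vec"
  assumes "v \<in> carrier_vec n" "v \<noteq> 0\<^sub>v n"
  obtains i where "i < n" "v $ i \<noteq> 0" "\<And>j. j < n \<Longrightarrow> \<bar>v $ j\<bar> \<le> \<bar>v $ i\<bar>"
proof -
  obtain i0 where "i0 < n" "v $ i0 \<noteq> 0"
    using nonzero_vec_index[OF assms] .
  define m where "m = Max ((\<lambda>j. \<bar>v $ j\<bar>) ` {..<n})"
  have "m \<in> (\<lambda>j. \<bar>v $ j\<bar>) ` {..<n}"
    unfolding m_def using \<open>i0 < n\<close> by (intro Max_in) auto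
  then obtain i where "i < n" "\<bar>v $ i\<bar> = m"
    by auto
  moreover have "\<bar>v $ j\<bar> \<le> m" if "j < n" for j
    unfolding m_def using that by simp
  moreover from this[OF \<open>i0 < n\<close>] have "v $ i \<noteq> 0"
    using \<open>v $ i0 \<noteq> 0\<close> \<open>\<bar>v $ i\<bar> = m\<close> by auto
  ultimately show ?thesis
    using that by blast
qed

lemma eigenvalue_diag_inv_diag_part_mult_near_1:
  assumes B: "B \<in> carrier_mat n n" and dom: "pos_diag_dominant B"
    and ev: "eigenvalue (diag_inv (diag_part B) * B) k"
  shows "\<bar>k - 1\<bar> < 1"
proof -
  have pos: "0 < B $$ (i, i)" if "i < n" for i
    using pos_diag_dominant_diag_pos[OF dom] B that by simp
  obtain v where v: "v \<in> carrier_vec n" "v \<noteq> 0\<^sub>v n"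
    and eigen: "mat n n (\<lambda>(i, j). B $$ (i, j) / B $$ (i, i)) *\<^sub>v v = k \<cdot>\<^sub>v v"
    using ev unfolding eigenvalue_def eigenvector_def diag_inv_diag_part_mult[OF B] by auto
  obtain i where "i < n" "v $ i \<noteq> 0" and max: "\<And>j. j < n \<Longrightarrow> \<bar>v $ j\<bar> \<le> \<bar>v $ i\<bar>"
    using nonzero_vec_max_abs_index[OF v] by blast
  have "(\<Sum>j<n. B $$ (i, j) / B $$ (i, i) * v $ j) = k * v $ i"
    using eigen[THEN arg_cong[where f = "\<lambda>u. u $ i"]] v \<open>i < n\<close>
    by (simp add: scalar_prod_def atLeast0LessThan)
  then have "(\<Sum>j<n. B $$ (i, j) * v $ j) = k * B $$ (i, i) * v $ i"
    using pos[OF \<open>i < n\<close>] by (simp add: sum_divide_distrib[symmetric] field_simps)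
  moreover have "(\<Sum>j<n. B $$ (i, j) * v $ j)
      = B $$ (i, i) * v $ i + (\<Sum>j \<in> {..<n} - {i}. B $$ (i, j) * v $ j)"
    using \<open>i < n\<close> by (subst sum.remove[of _ i]) auto
  ultimately have eq: "(k - 1) * B $$ (i, i) * v $ i = (\<Sum>j \<in> {..<n} - {i}. B $$ (i, j) * v $ j)"
    by (simp add: algebra_simps)
  have "\<bar>k - 1\<bar> * B $$ (i, i) * \<bar>v $ i\<bar> = \<bar>(k - 1) * B $$ (i, i) * v $ i\<bar>"
    using pos[OF \<open>i < n\<close>] by (simp add: abs_mult)
  also have "\<dots> = \<bar>\<Sum>j \<in> {..<n} - {i}. B $$ (i, j) * v $ j\<bar>"
    by (simp only: eq)
  also have "\<dots> \<le> (\<Sum>j \<in> {..<n} - {i}. \<bar>B $$ (i, j) * v $ j\<bar>)"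
    by (rule sum_abs)
  also have "\<dots> \<le> (\<Sum>j \<in> {..<n} - {i}. \<bar>B $$ (i, j)\<bar> * \<bar>v $ i\<bar>)"
    using max by (intro sum_mono) (simp add: abs_mult mult_left_mono)
  also have "\<dots> < B $$ (i, i) * \<bar>v $ i\<bar>"
    using dom B \<open>i < n\<close> \<open>v $ i \<noteq> 0\<close>
    by (simp add: pos_diag_dominant_def sum_distrib_right[symmetric])
  finally show ?thesis
    using pos[OF \<open>i < n\<close>] \<open>v $ i \<noteq> 0\<close> by (simp add: mult.assoc)
qed

lemma cnj_hermitian_form_symmetric:
  fixes B :: "real mat" and v :: "complex vec"
  assumes "B \<in> carrier_mat n n" "transpose_mat B = B"
  shows "cnj (\<Sum>i<n. \<Sum>j<n. cnj (v $ i) * of_real (B $$ (i, j)) * v $ j)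
    = (\<Sum>i<n. \<Sum>j<n. cnj (v $ i) * of_real (B $$ (i, j)) * v $ j)"
proof -
  have symm: "B $$ (j, i) = B $$ (i, j)" if "i < n" "j < n" for i j
  proof -
    have "B $$ (j, i) = transpose_mat B $$ (j, i)" using assms(2) by simp
    also have "\<dots> = B $$ (i, j)" using that assms(1) by simp
    finally show ?thesis .
  qed
  have "cnj (\<Sum>i<n. \<Sum>j<n. cnj (v $ i) * of_real (B $$ (i, j)) * v $ j)
      = (\<Sum>i<n. \<Sum>j<n. cnj (v $ j) * of_real (B $$ (i, j)) * v $ i)"
    by (simp add: mult_ac)
  also have "\<dots> = (\<Sum>j<n. \<Sum>i<n. cnj (v $ j) * of_real (B $$ (j, i)) * v $ i)"
    by (subst sum.swap) (simp add: symm)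
  finally show ?thesis .
qed

lemma eigenvalue_diag_mult_symmetric_real:
  fixes B :: "real mat"
  assumes B: "B \<in> carrier_mat n n" and sym: "transpose_mat B = B"
    and w: "\<And>i. i < n \<Longrightarrow> 0 < w i"
    and ev: "eigenvalue (map_mat complex_of_real (mat_diag n w * B)) z"
  shows "Im z = 0"
proof -
  let ?b = "\<lambda>i j. complex_of_real (B $$ (i, j))"
  have M: "map_mat complex_of_real (mat_diag n w * B) = mat n n (\<lambda>(i, j). of_real (w i) * ?b i j)"
    using B by (intro eq_matI) (auto simp: mat_diag_mult_left)
  obtain v where v: "v \<in> carrier_vec n" "v \<noteq> 0\<^sub>v n"
    and eigen: "mat n n (\<lambda>(i, j). of_real (w i) * ?b i j) *\<^sub>v v = z \<cdot>\<^sub>v v"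
    using ev unfolding eigenvalue_def eigenvector_def M by auto
  have row: "(\<Sum>j<n. ?b i j * v $ j) = z * v $ i / of_real (w i)" if "i < n" for i
  proof -
    have "(\<Sum>j<n. of_real (w i) * ?b i j * v $ j) = z * v $ i"
      using eigen[THEN arg_cong[where f = "\<lambda>u. u $ i"]] v that
      by (simp add: scalar_prod_def atLeast0LessThan)
    moreover have "(\<Sum>j<n. of_real (w i) * ?b i j * v $ j) = of_real (w i) * (\<Sum>j<n. ?b i j * v $ j)"
      by (simp add: sum_distrib_left mult.assoc)
    ultimately show ?thesis
      using w[OF that] by (simp add: field_simps)
  qed
  define S where "S = (\<Sum>i<n. \<Sum>j<n. cnj (v $ i) * ?b i j * v $ j)"
  define R where "R = (\<Sum>i<n. (cmod (v $ i))\<^sup>2 / w i)"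
  have "S = z * of_real R"
  proof -
    have "S = (\<Sum>i<n. cnj (v $ i) * (z * v $ i / of_real (w i)))"
      unfolding S_def by (intro sum.cong refl) (simp add: row mult.assoc sum_distrib_left[symmetric])
    also have "\<dots> = z * (\<Sum>i<n. of_real ((cmod (v $ i))\<^sup>2 / w i))"
      unfolding sum_distrib_left
      by (intro sum.cong refl) (simp add: complex_norm_square[symmetric] mult_ac)
    finally show ?thesis
      unfolding R_def of_real_sum .
  qed
  moreover have "cnj S = S"
    unfolding S_def by (rule cnj_hermitian_form_symmetric[OF B sym])
  moreover have "0 < R"
  proof -
    obtain i where "i < n" "v $ i \<noteq> 0"
      using nonzero_vec_index[OF v] .
    then have "0 < (cmod (v $ i))\<^sup>2 / w i"
      using w by simp
    also have "\<dots> \<le> R"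
      unfolding R_def using w \<open>i < n\<close> by (intro member_le_sum) (auto simp: less_imp_le)
    finally show ?thesis .
  qed
  ultimately have "cnj z = z"
    by simp
  then show ?thesis
    by (simp add: complex_eq_iff)
qed

definition mat_trace :: "'a::comm_ring_1 mat \<Rightarrow> 'a" where
  "mat_trace A = (\<Sum>i<dim_row A. A $$ (i, i))"

lemma mat_trace_mult_comm:
  assumes "A \<in> carrier_mat n m" "B \<in> carrier_mat m n"
  shows "mat_trace (A * B) = mat_trace (B * A)"
proof -
  have "mat_trace (A * B) = (\<Sum>i<n. \<Sum>k<m. A $$ (i, k) * B $$ (k, i))"
    using assms by (simp add: mat_trace_def scalar_prod_def atLeast0LessThan)
  also have "\<dots> = (\<Sum>k<m. \<Sum>i<n. B $$ (k, i) * A $$ (i, k))"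
    by (subst sum.swap) (simp add: mult.commute)
  also have "\<dots> = mat_trace (B * A)"
    using assms by (simp add: mat_trace_def scalar_prod_def atLeast0LessThan)
  finally show ?thesis .
qed

lemma mat_trace_similar:
  assumes "similar_mat_wit A U P Q" "A \<in> carrier_mat n n"
  shows "mat_trace A = mat_trace U"
proof -
  from assms have U: "U \<in> carrier_mat n n" and P: "P \<in> carrier_mat n n"
    and Q: "Q \<in> carrier_mat n n" and "Q * P = 1\<^sub>m n" and "A = P * U * Q"
    unfolding similar_mat_wit_def Let_def by auto
  have "mat_trace A = mat_trace (Q * (P * U))"
    unfolding \<open>A = P * U * Q\<close> by (rule mat_trace_mult_comm[of _ n n]) (use P U Q in auto)
  also have "Q * (P * U) = U"
    using U P Q \<open>Q * P = 1\<^sub>m n\<close> by (simp add: assoc_mult_mat[symmetric])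
  finally show ?thesis .
qed

lemma mat_trace_eq_sum_char_poly_roots:
  fixes A :: "complex mat"
  assumes "A \<in> carrier_mat n n" "char_poly A = (\<Prod>a \<leftarrow> as. [:- a, 1:])"
  shows "mat_trace A = sum_list as"
proof -
  obtain U P Q where "schur_decomposition A as = (U, P, Q)"
    by (cases "schur_decomposition A as") auto
  from schur_decomposition[OF assms this]
  have "similar_mat_wit A U P Q" "diag_mat U = as" by auto
  moreover have "mat_trace U = sum_list (diag_mat U)"
    by (simp add: mat_trace_def diag_mat_def sum_set_upt_conv_sum_list_nat[symmetric]
      atLeast0LessThan)
  ultimately show ?thesis
    using mat_trace_similar[OF _ assms(1)] by simp
qed

lemma eigenvalue_map_of_real_iff:
  fixes M :: "real mat"
  assumes "M \<in> carrier_mat n n"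
  shows "eigenvalue (map_mat complex_of_real M) (complex_of_real k) \<longleftrightarrow> eigenvalue M k"
proof -
  have "map_mat complex_of_real M \<in> carrier_mat n n" using assms by simp
  then show ?thesis
    using assms by (simp add: eigenvalue_root_char_poly of_real_hom.char_poly_hom
      of_real_hom.poly_map_poly)
qed

lemma finite_eigenvalues:
  fixes A :: "'a::field mat"
  assumes "A \<in> carrier_mat n n"
  shows "finite {k. eigenvalue A k}"
proof -
  have "char_poly A \<noteq> 0"
    using degree_monic_char_poly[OF assms] by auto
  then show ?thesis
    using poly_roots_finite eigenvalue_root_char_poly[OF assms] by simp
qed

lemma ex_eigenvalue_ge_mean:
  fixes M :: "real mat"
  assumes M: "M \<in> carrier_mat n n" and "0 < n"
    and real: "\<And>z. eigenvalue (map_mat complex_of_real M) z \<Longrightarrow> Im z = 0"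
  shows "\<exists>k. eigenvalue M k \<and> mat_trace M \<le> real n * k"
proof -
  let ?M = "map_mat complex_of_real M"
  have M': "?M \<in> carrier_mat n n" using M by simp
  obtain as where cp: "char_poly ?M = (\<Prod>a \<leftarrow> as. [:- a, 1:])" and "length as = n"
    using char_poly_factorized[OF M'] by blast
  with \<open>0 < n\<close> have "as \<noteq> []" by auto
  define m where "m = Max (Re ` set as)"
  have "m \<in> Re ` set as"
    unfolding m_def using \<open>as \<noteq> []\<close> by (intro Max_in) auto
  then obtain a where "a \<in> set as" "Re a = m"
    by auto
  have "eigenvalue ?M a"
    using \<open>a \<in> set as\<close> eigenvalue_root_char_poly[OF M'] unfolding cp poly_prod_list
    by (simp add: prod_list_zero_iff)
  with real have "a = complex_of_real m"
    using \<open>Re a = m\<close> by (simp add: complex_eq_iff)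
  with \<open>eigenvalue ?M a\<close> have "eigenvalue M m"
    using eigenvalue_map_of_real_iff[OF M] by simp
  moreover have "mat_trace M = sum_list (map Re as)"
  proof -
    have "Re (sum_list as) = sum_list (map Re as)"
      by (induction as) auto
    moreover have "mat_trace ?M = complex_of_real (mat_trace M)"
      using M by (simp add: mat_trace_def)
    ultimately show ?thesis
      using mat_trace_eq_sum_char_poly_roots[OF M' cp] by simp
  qed
  moreover have "sum_list (map Re as) \<le> real n * m"
    using sum_list_mono[of as Re "\<lambda>_. m"] \<open>length as = n\<close>
    by (simp add: m_def sum_list_triv)
  ultimately show ?thesis by auto
qed

lemma lambda_max_diag_inv_diag_part_mult_bounds:
  fixes B :: "real mat"
  assumes B: "B \<in> carrier_mat n n" and "0 < n"
    and sym: "transpose_mat B = B" and dom: "pos_diag_dominant B"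
  shows "1 \<le> lambda_max (diag_inv (diag_part B) * B)
    \<and> lambda_max (diag_inv (diag_part B) * B) < 2"
proof -
  let ?M = "diag_inv (diag_part B) * B"
  have M: "?M \<in> carrier_mat n n" using B by (simp add: diag_inv_diag_part_mult)
  have pos: "0 < B $$ (i, i)" if "i < n" for i
    using pos_diag_dominant_diag_pos[OF dom] B that by simp
  have "mat_trace ?M = (\<Sum>i<n. B $$ (i, i) / B $$ (i, i))"
    using B by (simp add: diag_inv_diag_part_mult mat_trace_def)
  also have "\<dots> = real n"
    using pos by (simp add: less_imp_neq[symmetric])
  finally have "mat_trace ?M = real n" .
  moreover have "Im z = 0" if "eigenvalue (map_mat complex_of_real ?M) z" for z
    using eigenvalue_diag_mult_symmetric_real[OF B sym, of "\<lambda>i. 1 / B $$ (i, i)"] pos that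
    by (simp add: diag_inv_diag_part[OF B])
  ultimately obtain k where "eigenvalue ?M k" "1 \<le> k"
    using ex_eigenvalue_ge_mean[OF M \<open>0 < n\<close>] \<open>0 < n\<close> by fastforce
  moreover have "k < 2" if "eigenvalue ?M k" for k
    using eigenvalue_diag_inv_diag_part_mult_near_1[OF B dom that] by simp
  ultimately show ?thesis
    using finite_eigenvalues[OF M] unfolding lambda_max_def
    by (metis (mono_tags) Max_ge Max_in empty_iff mem_Collect_eq order_trans)
qed

section \<open>The matrix B_h\<close>

lemma b_entry_sym: "b_entry \<alpha> N i j = b_entry \<alpha> N j i"
  unfolding b_entry_def Let_def by auto

lemma btil_off_eq:
  "btil_off \<alpha> N i
    = trapezoid_defect (3 - \<alpha>) (real i) + trapezoid_defect (3 - \<alpha>) (real N - real i - 1)"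
  by (simp add: btil_off_def trapezoid_defect_def powr_deriv_Suc_0 algebra_simps)

lemma btil_diag_eq:
  "btil_diag \<alpha> N i
    = fwd_diff 2 (powr_deriv (3 - \<alpha>) 1) (real i - 1)
      - trapezoid_defect (3 - \<alpha>) (real i) - trapezoid_defect (3 - \<alpha>) (real i - 1)
    + fwd_diff 2 (powr_deriv (3 - \<alpha>) 1) (real N - real i - 1)
      - trapezoid_defect (3 - \<alpha>) (real N - real i) - trapezoid_defect (3 - \<alpha>) (real N - real i - 1)"
  by (simp add: btil_diag_def trapezoid_defect_def fwd_diff_2 powr_deriv_Suc_0 algebra_simps)

lemma b_entry_eq:
  "b_entry \<alpha> N i j = - fwd_diff 4 (\<lambda>x. \<bar>x\<bar> powr (3 - \<alpha>)) (real j - real i - 2)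
     + (if i = j then btil_diag \<alpha> N i else 0)
     + (if j = i + 1 then btil_off \<alpha> N i else 0)
     + (if i = j + 1 then btil_off \<alpha> N j else 0)"
proof -
  have two_powr: "(2::real) powr (4 - \<alpha>) = 2 * 2 powr (3 - \<alpha>)"
    "(2::real) powr (5 - \<alpha>) = 4 * 2 powr (3 - \<alpha>)"
    using powr_add[of 2 1 "3 - \<alpha>"] powr_add[of 2 2 "3 - \<alpha>"] by simp_all
  consider "i = j" | "j = i + 1" | "i = j + 1" | "i + 2 \<le> j" | "j + 2 \<le> i"
    by linarith
  then show ?thesis
  proof cases
    case 4
    then show ?thesis
      by (simp add: b_entry_def fwd_diff_4 Let_def of_nat_diff algebra_simps)
  next
    case 5
    then show ?thesis
      by (simp add: b_entry_def fwd_diff_4 Let_def of_nat_diff algebra_simps)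
  qed (simp_all add: b_entry_def fwd_diff_4 two_powr)
qed

lemma b_entry_row_sum:
  assumes "1 \<le> i" "i < N"
  shows "(\<Sum>c<N - 1. b_entry \<alpha> N i (c + 1))
    = - fwd_diff 3 (\<lambda>x. \<bar>x\<bar> powr (3 - \<alpha>)) (real i - 2)
      - fwd_diff 3 (\<lambda>x. \<bar>x\<bar> powr (3 - \<alpha>)) (real N - real i - 2)
      + btil_diag \<alpha> N i + (if i + 1 < N then btil_off \<alpha> N i else 0)
      + (if 2 \<le> i then btil_off \<alpha> N (i - 1) else 0)"
proof -
  let ?g = "\<lambda>x. \<bar>x\<bar> powr (3 - \<alpha>)"
  have entry: "b_entry \<alpha> N i (c + 1) = - fwd_diff 4 ?g (real c + (- real i - 1))
      + (if c = i - 1 then btil_diag \<alpha> N i else 0) + (if c = i then btil_off \<alpha> N i else 0)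
      + (if c = i - 2 then if 2 \<le> i then btil_off \<alpha> N (i - 1) else 0 else 0)" for c
    using assms b_entry_eq[of \<alpha> N i "c + 1"] by (auto simp: algebra_simps)
  txt \<open>The sum telescopes, and by evenness of ?g its end point -i - 1 reflects to i - 2.\<close>
  have "(\<Sum>c<N - 1. fwd_diff 4 ?g (real c + (- real i - 1)))
      = fwd_diff 3 ?g (real N - real i - 2) + fwd_diff 3 ?g (real i - 2)"
  proof -
    have "fwd_diff 3 ?g (- real i - 1) = fwd_diff 3 ?g (- (real i - 2) - real 3)"
      by (rule arg_cong[where f = "fwd_diff 3 ?g"]) simp
    also have "\<dots> = - fwd_diff 3 ?g (real i - 2)"
      by (subst fwd_diff_reflect) simp_all
    finally have "fwd_diff 3 ?g (- real i - 1) = - fwd_diff 3 ?g (real i - 2)" .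
    moreover have "(\<Sum>c<N - 1. fwd_diff (Suc 3) ?g (real c + (- real i - 1)))
        = fwd_diff 3 ?g (real (N - 1) + (- real i - 1)) - fwd_diff 3 ?g (- real i - 1)"
      by (rule sum_fwd_diff_Suc)
    ultimately show ?thesis
      using assms by (simp add: of_nat_diff)
  qed
  moreover have "(\<Sum>c<N - 1. b_entry \<alpha> N i (c + 1))
      = - (\<Sum>c<N - 1. fwd_diff 4 ?g (real c + (- real i - 1)))
      + (\<Sum>c<N - 1. if c = i - 1 then btil_diag \<alpha> N i else 0)
      + (\<Sum>c<N - 1. if c = i then btil_off \<alpha> N i else 0)
      + (\<Sum>c<N - 1. if c = i - 2 then if 2 \<le> i then btil_off \<alpha> N (i - 1) else 0 else 0)"
    by (simp only: entry sum.distrib sum_negf)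
  moreover have "i - 1 < N - 1" "i - 2 < N - 1" "i < N - 1 \<longleftrightarrow> i + 1 < N"
    using assms by auto
  ultimately show ?thesis
    by simp
qed

lemma b_entry_nonpos:
  assumes "1 < \<alpha>" "\<alpha> < 2" "i \<noteq> j" "i < N" "j < N"
  shows "b_entry \<alpha> N i j \<le> 0"
proof -
  have defect: "trapezoid_defect (3 - \<alpha>) x < 0" if "0 \<le> x" for x
    using trapezoid_defect_neg[of "3 - \<alpha>" x] assms that by simp
  have off: "btil_off \<alpha> N k \<le> 0" if "k + 1 < N" for k
  proof -
    have "0 \<le> real N - real k - 1" using that by linarith
    with defect[of "real k"] defect[of "real N - real k - 1"] show ?thesis
      unfolding btil_off_eq by simp
  qed
  have "0 \<le> fwd_diff 4 (\<lambda>x. \<bar>x\<bar> powr (3 - \<alpha>)) (real j - real i - 2)"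
    using fwd_diff_4_abs_powr_nonneg[of "3 - \<alpha>" i j] assms by simp
  with off[of i] off[of j] show ?thesis
    using assms unfolding b_entry_eq by auto
qed

lemma b_entry_row_sum_pos:
  assumes "1 < \<alpha>" "\<alpha> < 2" "1 \<le> i" "i < N"
  shows "0 < (\<Sum>c<N - 1. b_entry \<alpha> N i (c + 1))"
proof -
  define p where "p = 3 - \<alpha>"
  have p: "1 < p" "p < 2" using assms p_def by auto
  define l where "l = N - i"
  have "1 \<le> l" using assms l_def by simp
  have idx: "real N - real i = real l" "real N - real i - 1 = real l - 1"
    "real N - real i - 2 = real l - 2" "real (i - 1) = real i - 1"
    using assms l_def by auto
  have margins:
    "fwd_diff 3 (\<lambda>x. \<bar>x\<bar> powr p) (real i - 2) < fwd_diff 2 (powr_deriv p 1) (real i - 1)"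
    "fwd_diff 3 (\<lambda>x. \<bar>x\<bar> powr p) (real l - 2) < fwd_diff 2 (powr_deriv p 1) (real l - 1)"
    using fwd_diff_3_abs_powr_lt[OF p] assms \<open>1 \<le> l\<close> by auto
  have defects: "trapezoid_defect p (real i) < 0" "trapezoid_defect p (real i - 1) < 0"
    "trapezoid_defect p (real l) < 0" "trapezoid_defect p (real l - 1) < 0"
    using trapezoid_defect_neg[OF p] assms \<open>1 \<le> l\<close> by auto
  show ?thesis
    unfolding b_entry_row_sum[OF assms(3,4)] btil_diag_eq btil_off_eq p_def[symmetric] idx
    using margins defects by (cases "i + 1 < N"; cases "2 \<le> i") (auto simp: idx)
qed

lemma B_h_carrier: "B_h \<alpha> N \<in> carrier_mat (N - 1) (N - 1)"
  by (simp add: B_h_def)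

lemma B_h_symmetric: "transpose_mat (B_h \<alpha> N) = B_h \<alpha> N"
proof (rule eq_matI)
  fix i j assume "i < dim_row (B_h \<alpha> N)" "j < dim_col (B_h \<alpha> N)"
  then show "transpose_mat (B_h \<alpha> N) $$ (i, j) = B_h \<alpha> N $$ (i, j)"
    by (simp add: B_h_def) (rule b_entry_sym)
qed (simp_all add: B_h_def)

lemma B_h_pos_diag_dominant:
  assumes "1 < \<alpha>" "\<alpha> < 2"
  shows "pos_diag_dominant (B_h \<alpha> N)"
proof (rule pos_diag_dominant_if_offdiag_nonpos[OF B_h_carrier])
  fix i j assume "i < N - 1" "j < N - 1" "i \<noteq> j"
  then show "B_h \<alpha> N $$ (i, j) \<le> 0"
    using b_entry_nonpos[OF assms, of "i + 1" "j + 1" N] by (simp add: B_h_def)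
next
  fix i assume "i < N - 1"
  then have "(\<Sum>j<N - 1. B_h \<alpha> N $$ (i, j)) = (\<Sum>c<N - 1. b_entry \<alpha> N (i + 1) (c + 1))"
    by (simp add: B_h_def)
  also have "\<dots> > 0"
    using b_entry_row_sum_pos[OF assms, of "i + 1" N] \<open>i < N - 1\<close> by simp
  finally show "0 < (\<Sum>j<N - 1. B_h \<alpha> N $$ (i, j))" .
qed

lemma kappa_pos:
  assumes "1 < \<alpha>" "\<alpha> < 2"
  shows "0 < kappa \<alpha>"
proof -
  have "0 < cos (pi - \<alpha> * pi / 2)"
    using assms by (intro cos_gt_zero) (auto simp: field_simps)
  then show ?thesis
    unfolding kappa_def by (simp add: divide_neg_neg)
qed

lemma A_h_eq_smult_B_h:
  assumes "1 < \<alpha>" "\<alpha> < 2" "0 < b" "0 < N"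
  obtains c where "0 < c" "A_h \<alpha> b N = c \<cdot>\<^sub>m B_h \<alpha> N"
proof
  show "0 < kappa \<alpha> / ((b / real N) powr (\<alpha> - 1) * Gamma (4 - \<alpha>))"
    using kappa_pos assms by (intro divide_pos_pos mult_pos_pos Gamma_real_pos) auto
qed (simp add: A_h_def Let_def)

theorem lemma3p4:
  fixes \<alpha> b :: real and N :: nat
  assumes "1 < \<alpha>" "\<alpha> < 2" "b > 0" "N \<ge> 2"
  shows "1 \<le> lambda_max (diag_inv (diag_part (A_h \<alpha> b N)) * A_h \<alpha> b N)
       \<and> lambda_max (diag_inv (diag_part (A_h \<alpha> b N)) * A_h \<alpha> b N) < 2"
proof -
  have "0 < N" "0 < N - 1"
    using assms(4) by simp_all
  obtain c where "0 < c" "A_h \<alpha> b N = c \<cdot>\<^sub>m B_h \<alpha> N"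
    using A_h_eq_smult_B_h[OF assms(1,2,3) \<open>0 < N\<close>] by blast
  then have "diag_inv (diag_part (A_h \<alpha> b N)) * A_h \<alpha> b N
      = diag_inv (diag_part (B_h \<alpha> N)) * B_h \<alpha> N"
    using diag_inv_diag_part_smult_mult[OF B_h_carrier] by simp
  then show ?thesis
    using lambda_max_diag_inv_diag_part_mult_bounds[OF B_h_carrier \<open>0 < N - 1\<close> B_h_symmetric
        B_h_pos_diag_dominant[OF assms(1,2)]]
    by (simp only:)
qed

end
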